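(* Let $b\in(0,\frac16)$, let $G$ and $v_{\max}$ be as below, and let $u_-,u_+\in[-1,1]$ with $u_->v_{\max}$ and $u_+<-v_{\max}$. Then the upper concave envelope $G_\frown$ of $G$ on $[u_+,u_-]$ equals $G$ on $[u_+,-v_{\max}]\cup[v_{\max},u_-]$ and equals the constant $G(v_{\max})$ on $[-v_{\max},v_{\max}]$. Consequently, the entropy solution $u(x,t)$ of the Riemann problem $\partial_tu+\partial_xG(u)=0$, $u(x,0)=u_-$ for $x\le0$, $u(x,0)=u_+$ for $x>0$, consists of a rarefaction fan, a stationary shock at $x=0$, and a rarefaction fan, with $\lim_{x\to0^-}u(x,t)=v_{\max}$ and $\lim_{x\to0^+}u(x,t)=-v_{\max}$ for every $t>0$; in particular the jump at $0$ is $-2v_{\max}$.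
   Context: $G(v)=-\frac{v^2}{2}+\frac{4b^2+(1-2b)^2v^2}{2(4b^2+(1-2b)\sqrt{4b^2+(1-4b)v^2})}$ on $[-1,1]$ and $v_{\max}=\frac12\sqrt{\frac{(1+2b)(1-6b)}{1-4b}}$ (the positive global maximum point of $G$). The upper concave envelope of $G$ on an interval $I$ is the smallest concave function on $I$ that is $\ge G$ on $I$. For $u_->u_+$, the entropy solution of the Riemann problem is given by: $u(x,t)=u_-$ if $x\le (G_\frown)'(u_-)t$; $u(x,t)=[(G_\frown)']^{-1}(x/t)$ if $(G_\frown)'(u_-)t<x\le (G_\frown)'(u_+)t$; $u(x,t)=u_+$ if $x>(G_\frown)'(u_+)t$, where $G_\frown$ is the upper concave envelope of $G$ on $[u_+,u_-]$. *)

theory Defs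
  imports "HOL-Analysis.Analysis"
begin

definition Gf :: "real \<Rightarrow> real \<Rightarrow> real" where
  "Gf b v = - v\<^sup>2 / 2 + (4*b\<^sup>2 + (1 - 2*b)\<^sup>2 * v\<^sup>2) /
     (2 * (4*b\<^sup>2 + (1 - 2*b) * sqrt (4*b\<^sup>2 + (1 - 4*b) * v\<^sup>2)))"

definition vmax :: "real \<Rightarrow> real" where
  "vmax b = (1/2) * sqrt ((1 + 2*b) * (1 - 6*b) / (1 - 4*b))"

text \<open>Only its values on I are meaningful.\<close>
definition upper_concave_envelope :: "real set \<Rightarrow> (real \<Rightarrow> real) \<Rightarrow> real \<Rightarrow> real" where
  "upper_concave_envelope I g = (\<lambda>v. Inf {h v | h. concave_on I h \<and> (\<forall>x\<in>I. g x \<le> h x)})"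

definition deriv_within :: "real set \<Rightarrow> (real \<Rightarrow> real) \<Rightarrow> real \<Rightarrow> real" where
  "deriv_within I f v = (SOME D. (f has_real_derivative D) (at v within I))"

definition riemann_solution :: "(real \<Rightarrow> real) \<Rightarrow> real \<Rightarrow> real \<Rightarrow> real \<Rightarrow> real \<Rightarrow> real" where
  "riemann_solution g um up x t =
     (let I = {up..um};
          H = upper_concave_envelope I g;
          D = deriv_within I H
      in if x \<le> D um * t then um
         else if x \<le> D up * t then (THE v. v \<in> I \<and> D v = x / t)
         else up)"

end

theory Submission
  imports Defs
begin

text \<open>With \<open>s(v) = sqrt (4b\<^sup>2 + (1 - 4b) v\<^sup>2)\<close> the flux has the vertex form
  \<open>G = G(vmax) - (s - (1 - 2b)/2)\<^sup>2 / (2(1 - 4b))\<close>, and \<open>s = (1 - 2b)/2\<close> exactly at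
  \<open>|v| = vmax\<close>. Replacing the bracket by its positive part yields a function \<open>H\<close> that equals \<open>G\<close>
  for \<open>|v| \<ge> vmax\<close> and the constant \<open>G(vmax)\<close> in between. \<open>H\<close> is concave because \<open>s\<close> is convex
  (it is the Euclidean norm of an affine function of \<open>v\<close>), and every concave majorant of \<open>G\<close>
  is at least \<open>G(\<plusminus>vmax)\<close> on \<open>[-vmax, vmax]\<close>, so \<open>H\<close> is the envelope. The slope of \<open>H\<close>
  vanishes on the plateau and is continuous and strictly decreasing beyond it, so inverting the
  slope at \<open>x/t \<rightarrow> 0\<^sup>\<mp>\<close> selects points just beyond \<open>\<plusminus>vmax\<close>.\<close>

lemma convex_on_sqrt_quadratic:
  fixes a k :: real
  assumes "0 \<le> a" "0 \<le> k"
  shows "convex_on UNIV (\<lambda>v. sqrt (a + k * v\<^sup>2))"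
proof (rule convex_onI)
  define P :: "real \<Rightarrow> real \<times> real" where "P v = (sqrt a, sqrt k * v)" for v
  have norm_P: "norm (P v) = sqrt (a + k * v\<^sup>2)" for v
    using assms by (simp add: P_def norm_prod_def power_mult_distrib)
  fix t x y :: real assume t: "0 < t" "t < 1"
  have "P ((1 - t) *\<^sub>R x + t *\<^sub>R y) = (1 - t) *\<^sub>R P x + t *\<^sub>R P y"
    by (simp add: P_def algebra_simps)
  then have "norm (P ((1 - t) *\<^sub>R x + t *\<^sub>R y)) \<le> (1 - t) * norm (P x) + t * norm (P y)"
    using t norm_triangle_ineq[of "(1 - t) *\<^sub>R P x" "t *\<^sub>R P y"] by simp
  then show "sqrt (a + k * ((1 - t) *\<^sub>R x + t *\<^sub>R y)\<^sup>2)
      \<le> (1 - t) * sqrt (a + k * x\<^sup>2) + t * sqrt (a + k * y\<^sup>2)"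
    by (simp only: norm_P)
qed simp

lemma convex_on_max0_square:
  fixes f :: "'a::real_vector \<Rightarrow> real"
  assumes "convex_on S f"
  shows "convex_on S (\<lambda>x. (max (f x) 0)\<^sup>2)"
proof (rule convex_onI)
  fix t :: real and x y assume t: "0 < t" "t < 1" and xy: "x \<in> S" "y \<in> S"
  define p where "p z = max (f z) 0" for z
  have p_convex: "p ((1 - t) *\<^sub>R x + t *\<^sub>R y) \<le> (1 - t) * p x + t * p y"
  proof -
    have "f ((1 - t) *\<^sub>R x + t *\<^sub>R y) \<le> (1 - t) * f x + t * f y"
      using convex_onD[OF assms, of t x y] t xy by simp
    also have "\<dots> \<le> (1 - t) * p x + t * p y"
      using t by (intro add_mono mult_left_mono) (auto simp: p_def)
    finally show ?thesis using t by (auto simp: p_def)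
  qed
  have "(p ((1 - t) *\<^sub>R x + t *\<^sub>R y))\<^sup>2 \<le> ((1 - t) * p x + t * p y)\<^sup>2"
    using p_convex by (intro power_mono) (auto simp: p_def)
  also have "\<dots> = (1 - t) * (p x)\<^sup>2 + t * (p y)\<^sup>2 - t * (1 - t) * (p x - p y)\<^sup>2"
    by (simp add: algebra_simps power2_eq_square)
  also have "\<dots> \<le> (1 - t) * (p x)\<^sup>2 + t * (p y)\<^sup>2"
    using t by simp
  finally show "(max (f ((1 - t) *\<^sub>R x + t *\<^sub>R y)) 0)\<^sup>2 \<le> (1 - t) * (max (f x) 0)\<^sup>2 + t * (max (f y) 0)\<^sup>2"
    by (simp add: p_def)
next
  show "convex S" using assms by (rule convex_on_imp_convex)
qed

lemma has_real_derivative_max0_square: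
  "((\<lambda>x::real. (max x 0)\<^sup>2) has_real_derivative 2 * max x 0) (at x)"
proof (cases x "0::real" rule: linorder_cases)
  case less
  have "((\<lambda>x::real. 0) has_real_derivative 0) (at x)" by simp
  then have "((\<lambda>x::real. (max x 0)\<^sup>2) has_real_derivative 0) (at x)"
    by (rule has_field_derivative_transform_within_open[where S="{..<0}"]) (use less in auto)
  then show ?thesis using less by simp
next
  case equal
  have "((\<lambda>y::real. max y 0) \<longlongrightarrow> max 0 0) (at 0)"
    by (intro tendsto_intros)
  moreover have "\<forall>\<^sub>F y in at (0::real). max y 0 = ((max y 0)\<^sup>2 - (max 0 0)\<^sup>2) / (y - 0)"
    unfolding eventually_at_filter
    by (rule always_eventually) (auto simp: max_def power2_eq_square)
  ultimately have "((\<lambda>y::real. ((max y 0)\<^sup>2 - (max 0 0)\<^sup>2) / (y - 0)) \<longlongrightarrow> 0) (at 0)"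
    using tendsto_cong by force
  then show ?thesis unfolding equal has_field_derivative_iff by simp
next
  case greater
  have "((\<lambda>x::real. x\<^sup>2) has_real_derivative 2 * x) (at x)"
    by (auto intro!: derivative_eq_intros)
  then have "((\<lambda>x::real. (max x 0)\<^sup>2) has_real_derivative 2 * x) (at x)"
    by (rule has_field_derivative_transform_within_open[where S="{0<..}"]) (use greater in auto)
  then show ?thesis using greater by simp
qed

lemma upper_concave_envelope_eqI:
  assumes "concave_on I h" "\<And>x. x \<in> I \<Longrightarrow> g x \<le> h x"
    and "\<And>h'. concave_on I h' \<Longrightarrow> (\<forall>x\<in>I. g x \<le> h' x) \<Longrightarrow> h v \<le> h' v"
  shows "upper_concave_envelope I g v = h v"
  unfolding upper_concave_envelope_def
  by (rule cInf_eq_minimum) (use assms in auto)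

lemma deriv_within_Icc_eqI:
  fixes f :: "real \<Rightarrow> real"
  assumes "a < b" "v \<in> {a..b}" "(f has_real_derivative D) (at v within {a..b})"
  shows "deriv_within {a..b} f v = D"
  unfolding deriv_within_def
proof (rule some_equality)
  fix D' assume "(f has_real_derivative D') (at v within {a..b})"
  then show "D' = D"
    using vector_derivative_unique_within_closed_interval[of a b v] assms
    by (simp add: has_real_derivative_iff_has_vector_derivative)
qed (fact assms(3))

lemma tendsto_THE_preimage_at_left:
  fixes f :: "real \<Rightarrow> real"
  assumes "m < p" "continuous_on {m..p} f" "strict_antimono_on {m..p} f" "{m..p} \<subseteq> S"
    and "\<And>v. v \<in> S \<Longrightarrow> f v < f m \<Longrightarrow> v \<in> {m..p}"
  shows "((\<lambda>y. THE v. v \<in> S \<and> f v = y) \<longlongrightarrow> m) (at_left (f m))"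
  unfolding tendsto_iff
proof (intro allI impI)
  fix e :: real assume "0 < e"
  define q where "q = min (m + e/2) p"
  have q: "m < q" "q \<le> p" "q - m < e" using \<open>0 < e\<close> assms(1) by (auto simp: q_def)
  then have "f q < f m" using assms(3) by (auto simp: monotone_on_def)
  then have "\<forall>\<^sub>F y in at_left (f m). y \<in> {f q<..<f m}" by (rule eventually_at_left_real)
  then show "\<forall>\<^sub>F y in at_left (f m). dist (THE v. v \<in> S \<and> f v = y) m < e"
  proof (rule eventually_mono)
    fix y assume y: "y \<in> {f q<..<f m}"
    obtain w where w: "m \<le> w" "w \<le> q" "f w = y"
      using IVT2'[of f q y m] y q assms(2) continuous_on_subset[of "{m..p}" f "{m..q}"] by auto
    have "(THE v. v \<in> S \<and> f v = y) = w"
    proof (rule the_equality)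
      show "w \<in> S \<and> f w = y" using w q assms(4) by auto
    next
      fix v assume v: "v \<in> S \<and> f v = y"
      then have "v \<in> {m..p}" using y assms(5) by auto
      then show "v = w"
        using w v q strict_antimono_iff_antimono[THEN iffD1, OF assms(3)] by (auto dest: inj_onD)
    qed
    then show "dist (THE v. v \<in> S \<and> f v = y) m < e"
      using w q by (simp add: dist_real_def)
  qed
qed

lemma tendsto_THE_preimage_at_right:
  fixes f :: "real \<Rightarrow> real"
  assumes "p < m" "continuous_on {p..m} f" "strict_antimono_on {p..m} f" "{p..m} \<subseteq> S"
    and "\<And>v. v \<in> S \<Longrightarrow> f m < f v \<Longrightarrow> v \<in> {p..m}"
  shows "((\<lambda>y. THE v. v \<in> S \<and> f v = y) \<longlongrightarrow> m) (at_right (f m))"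
  unfolding tendsto_iff
proof (intro allI impI)
  fix e :: real assume "0 < e"
  define q where "q = max (m - e/2) p"
  have q: "q < m" "p \<le> q" "m - q < e" using \<open>0 < e\<close> assms(1) by (auto simp: q_def)
  then have "f m < f q" using assms(3) by (auto simp: monotone_on_def)
  then have "\<forall>\<^sub>F y in at_right (f m). y \<in> {f m<..<f q}" by (rule eventually_at_right_real)
  then show "\<forall>\<^sub>F y in at_right (f m). dist (THE v. v \<in> S \<and> f v = y) m < e"
  proof (rule eventually_mono)
    fix y assume y: "y \<in> {f m<..<f q}"
    obtain w where w: "q \<le> w" "w \<le> m" "f w = y"
      using IVT2'[of f m y q] y q assms(2) continuous_on_subset[of "{p..m}" f "{q..m}"] by auto
    have "(THE v. v \<in> S \<and> f v = y) = w"
    proof (rule the_equality)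
      show "w \<in> S \<and> f w = y" using w q assms(4) by auto
    next
      fix v assume v: "v \<in> S \<and> f v = y"
      then have "v \<in> {p..m}" using y assms(5) by auto
      then show "v = w"
        using w v q strict_antimono_iff_antimono[THEN iffD1, OF assms(3)] by (auto dest: inj_onD)
    qed
    then show "dist (THE v. v \<in> S \<and> f v = y) m < e"
      using w q by (simp add: dist_real_def)
  qed
qed

lemma riemann_solution_eq_THE:
  assumes "\<And>v. v \<in> {up..um} \<Longrightarrow> deriv_within {up..um} (upper_concave_envelope {up..um} g) v = d v"
    and "up \<le> um" "d um * t < x" "x \<le> d up * t"
  shows "riemann_solution g um up x t = (THE v. v \<in> {up..um} \<and> d v = x / t)"
proof -
  have "(\<lambda>v. v \<in> {up..um} \<and> deriv_within {up..um} (upper_concave_envelope {up..um} g) v = x / t)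
      = (\<lambda>v. v \<in> {up..um} \<and> d v = x / t)"
    using assms(1) by auto
  then show ?thesis
    using assms by (simp add: riemann_solution_def Let_def)
qed

lemma riemann_solution_tendsto_at_left:
  fixes g d :: "real \<Rightarrow> real"
  assumes slope: "\<And>v. v \<in> {up..um} \<Longrightarrow> deriv_within {up..um} (upper_concave_envelope {up..um} g) v = d v"
    and "up \<le> m" "m < um" "continuous_on {m..um} d" "strict_antimono_on {m..um} d"
    and "d m = 0" "0 \<le> d up" "\<And>v. v \<in> {up..um} \<Longrightarrow> d v < 0 \<Longrightarrow> m \<le> v"
    and "0 < t"
  shows "((\<lambda>x. riemann_solution g um up x t) \<longlongrightarrow> m) (at_left 0)"
proof -
  have "((\<lambda>y. THE v. v \<in> {up..um} \<and> d v = y) \<longlongrightarrow> m) (at_left 0)"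
    using tendsto_THE_preimage_at_left[of m um d "{up..um}"] assms by auto
  moreover have "filterlim (\<lambda>x. x / t) (at_left 0) (at_left 0)"
    using \<open>0 < t\<close> by (intro tendsto_imp_filterlim_at_left tendsto_eq_intros)
      (auto simp: eventually_at_filter divide_neg_pos)
  ultimately have THE_lim: "((\<lambda>x. THE v. v \<in> {up..um} \<and> d v = x / t) \<longlongrightarrow> m) (at_left 0)"
    by (rule filterlim_compose)
  have "d um < 0" using monotone_onD[OF assms(5), of m um] assms(3,6) by simp
  then have "\<forall>\<^sub>F x in at_left 0. x \<in> {d um * t<..<0}"
    using \<open>0 < t\<close> by (intro eventually_at_left_real) (simp add: mult_neg_pos)
  then have "\<forall>\<^sub>F x in at_left 0. (THE v. v \<in> {up..um} \<and> d v = x / t) = riemann_solution g um up x t"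
  proof (rule eventually_mono)
    fix x assume "x \<in> {d um * t<..<0}"
    moreover have "0 \<le> d up * t" using assms(7,9) by simp
    ultimately show "(THE v. v \<in> {up..um} \<and> d v = x / t) = riemann_solution g um up x t"
      using assms(2,3) by (intro riemann_solution_eq_THE[OF slope, symmetric]) auto
  qed
  from tendsto_cong[OF this] THE_lim show ?thesis by simp
qed

lemma riemann_solution_tendsto_at_right:
  fixes g d :: "real \<Rightarrow> real"
  assumes slope: "\<And>v. v \<in> {up..um} \<Longrightarrow> deriv_within {up..um} (upper_concave_envelope {up..um} g) v = d v"
    and "up < m" "m \<le> um" "continuous_on {up..m} d" "strict_antimono_on {up..m} d"
    and "d m = 0" "d um \<le> 0" "\<And>v. v \<in> {up..um} \<Longrightarrow> 0 < d v \<Longrightarrow> v \<le> m"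
    and "0 < t"
  shows "((\<lambda>x. riemann_solution g um up x t) \<longlongrightarrow> m) (at_right 0)"
proof -
  have "((\<lambda>y. THE v. v \<in> {up..um} \<and> d v = y) \<longlongrightarrow> m) (at_right 0)"
    using tendsto_THE_preimage_at_right[of up m d "{up..um}"] assms by auto
  moreover have "filterlim (\<lambda>x. x / t) (at_right 0) (at_right 0)"
    using \<open>0 < t\<close> by (intro tendsto_imp_filterlim_at_right tendsto_eq_intros)
      (auto simp: eventually_at_filter)
  ultimately have THE_lim: "((\<lambda>x. THE v. v \<in> {up..um} \<and> d v = x / t) \<longlongrightarrow> m) (at_right 0)"
    by (rule filterlim_compose)
  have "0 < d up" using monotone_onD[OF assms(5), of up m] assms(2,6) by simp
  then have "\<forall>\<^sub>F x in at_right 0. x \<in> {0<..<d up * t}"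
    using \<open>0 < t\<close> by (intro eventually_at_right_real) simp
  then have "\<forall>\<^sub>F x in at_right 0. (THE v. v \<in> {up..um} \<and> d v = x / t) = riemann_solution g um up x t"
  proof (rule eventually_mono)
    fix x assume "x \<in> {0<..<d up * t}"
    moreover have "d um * t \<le> 0" using assms(7,9) by (simp add: mult_nonpos_nonneg)
    ultimately show "(THE v. v \<in> {up..um} \<and> d v = x / t) = riemann_solution g um up x t"
      using assms(2,3) by (intro riemann_solution_eq_THE[OF slope, symmetric]) auto
  qed
  from tendsto_cong[OF this] THE_lim show ?thesis by simp
qed

definition Gf_sqrt :: "real \<Rightarrow> real \<Rightarrow> real" where
  "Gf_sqrt b v = sqrt (4*b\<^sup>2 + (1 - 4*b) * v\<^sup>2)"

definition Gf_hull :: "real \<Rightarrow> real \<Rightarrow> real" where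
  "Gf_hull b v = Gf b (vmax b) - (max (Gf_sqrt b v - (1 - 2*b)/2) 0)\<^sup>2 / (2*(1 - 4*b))"

definition Gf_hull_slope :: "real \<Rightarrow> real \<Rightarrow> real" where
  "Gf_hull_slope b v = - (max (Gf_sqrt b v - (1 - 2*b)/2) 0 * v / Gf_sqrt b v)"

locale Gf_parameter =
  fixes b :: real
  assumes b_pos: "0 < b" and b_less: "b < 1/6"
begin

lemma Gf_sqrt_pos: "0 < Gf_sqrt b v"
  unfolding Gf_sqrt_def using b_pos b_less by (intro real_sqrt_gt_zero add_pos_nonneg) auto

lemma Gf_sqrt_square: "(Gf_sqrt b v)\<^sup>2 = 4*b\<^sup>2 + (1 - 4*b) * v\<^sup>2"
  unfolding Gf_sqrt_def using b_less by simp

lemma Gf_sqrt_minus: "Gf_sqrt b (- v) = Gf_sqrt b v"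
  by (simp add: Gf_sqrt_def)

lemma Gf_sqrt_mono: "0 \<le> v \<Longrightarrow> v \<le> w \<Longrightarrow> Gf_sqrt b v \<le> Gf_sqrt b w"
  unfolding Gf_sqrt_def using b_less by (simp add: mult_left_mono power_mono)

lemma vmax_pos: "0 < vmax b"
  unfolding vmax_def using b_pos b_less by simp

lemma vmax_square: "(1 - 4*b) * (vmax b)\<^sup>2 = (1 - 2*b)\<^sup>2/4 - 4*b\<^sup>2"
proof -
  have "0 \<le> (1 + 2*b) * (1 - 6*b) / (1 - 4*b)" using b_pos b_less by simp
  then have "(vmax b)\<^sup>2 = (1 + 2*b) * (1 - 6*b) / (1 - 4*b) / 4"
    unfolding vmax_def by (simp add: power_mult_distrib power_divide)
  then show ?thesis
    using b_less by (simp add: field_simps power2_eq_square)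
qed

lemma Gf_sqrt_square_diff:
  "(Gf_sqrt b v)\<^sup>2 - ((1 - 2*b)/2)\<^sup>2 = (1 - 4*b) * (v\<^sup>2 - (vmax b)\<^sup>2)"
  using vmax_square by (simp add: Gf_sqrt_square right_diff_distrib power_divide)

lemma Gf_sqrt_le_iff: "Gf_sqrt b v \<le> (1 - 2*b)/2 \<longleftrightarrow> \<bar>v\<bar> \<le> vmax b"
proof -
  have "Gf_sqrt b v \<le> (1 - 2*b)/2 \<longleftrightarrow> (Gf_sqrt b v)\<^sup>2 \<le> ((1 - 2*b)/2)\<^sup>2"
    using Gf_sqrt_pos[of v] b_less by (simp add: abs_le_square_iff[symmetric])
  also have "\<dots> \<longleftrightarrow> (1 - 4*b) * (v\<^sup>2 - (vmax b)\<^sup>2) \<le> 0"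
    using Gf_sqrt_square_diff[of v] by linarith
  also have "\<dots> \<longleftrightarrow> v\<^sup>2 \<le> (vmax b)\<^sup>2"
    using b_less by (simp add: mult_le_0_iff)
  also have "\<dots> \<longleftrightarrow> \<bar>v\<bar> \<le> vmax b"
    using vmax_pos by (simp add: abs_le_square_iff[symmetric])
  finally show ?thesis .
qed

lemma Gf_sqrt_ge_iff: "(1 - 2*b)/2 \<le> Gf_sqrt b v \<longleftrightarrow> vmax b \<le> \<bar>v\<bar>"
proof -
  have "(1 - 2*b)/2 \<le> Gf_sqrt b v \<longleftrightarrow> ((1 - 2*b)/2)\<^sup>2 \<le> (Gf_sqrt b v)\<^sup>2"
    using Gf_sqrt_pos[of v] b_less by (simp add: abs_le_square_iff[symmetric])
  also have "\<dots> \<longleftrightarrow> 0 \<le> (1 - 4*b) * (v\<^sup>2 - (vmax b)\<^sup>2)"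
    using Gf_sqrt_square_diff[of v] by linarith
  also have "\<dots> \<longleftrightarrow> (vmax b)\<^sup>2 \<le> v\<^sup>2"
    using b_less by (simp add: zero_le_mult_iff)
  also have "\<dots> \<longleftrightarrow> vmax b \<le> \<bar>v\<bar>"
    using vmax_pos by (simp add: abs_le_square_iff[symmetric])
  finally show ?thesis .
qed

lemma Gf_sqrt_vmax: "Gf_sqrt b (vmax b) = (1 - 2*b)/2"
  using Gf_sqrt_le_iff Gf_sqrt_ge_iff vmax_pos by (simp add: order_antisym)


lemma Gf_eq_Gf_sqrt: "Gf b v = Gf_sqrt b v * (1 - 2*b - Gf_sqrt b v) / (2*(1 - 4*b))"
proof -
  define s where "s = Gf_sqrt b v"
  define D where "D = 4*b\<^sup>2 + (1 - 2*b) * s"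
  have kv: "(1 - 4*b) * v\<^sup>2 = s\<^sup>2 - 4*b\<^sup>2"
    using Gf_sqrt_square[of v] by (simp add: s_def)
  have pos: "0 < D" "0 < 1 - 4*b"
    using Gf_sqrt_pos[of v] b_pos b_less by (auto simp: s_def D_def intro!: add_pos_pos)
  have "(1 - 4*b) * (- v\<^sup>2 * D + 4*b\<^sup>2 + (1 - 2*b)\<^sup>2 * v\<^sup>2)
      = - ((1 - 4*b) * v\<^sup>2) * D + (1 - 4*b) * 4*b\<^sup>2 + (1 - 2*b)\<^sup>2 * ((1 - 4*b) * v\<^sup>2)"
    by (simp add: algebra_simps)
  also have "\<dots> = s * (1 - 2*b - s) * D"
    unfolding kv D_def by (simp add: algebra_simps power2_eq_square)
  finally have key: "(1 - 4*b) * (- v\<^sup>2 * D + 4*b\<^sup>2 + (1 - 2*b)\<^sup>2 * v\<^sup>2) = s * (1 - 2*b - s) * D" .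
  have "Gf b v = - v\<^sup>2 / 2 + (4*b\<^sup>2 + (1 - 2*b)\<^sup>2 * v\<^sup>2) / (2 * D)"
    by (simp add: Gf_def s_def D_def Gf_sqrt_def)
  also have "\<dots> = (1 - 4*b) * (- v\<^sup>2 * D + 4*b\<^sup>2 + (1 - 2*b)\<^sup>2 * v\<^sup>2) / (2 * D * (1 - 4*b))"
    using pos by (simp add: field_simps)
  also have "\<dots> = s * (1 - 2*b - s) / (2*(1 - 4*b))"
    unfolding key using pos by simp
  finally show ?thesis by (simp add: s_def)
qed

lemma Gf_vmax: "Gf b (vmax b) = (1 - 2*b)\<^sup>2 / (8*(1 - 4*b))"
proof -
  have "Gf b (vmax b) = (1 - 2*b)/2 * (1 - 2*b - (1 - 2*b)/2) / (2*(1 - 4*b))"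
    by (simp only: Gf_eq_Gf_sqrt Gf_sqrt_vmax)
  also have "\<dots> = (1 - 2*b)\<^sup>2 / (8*(1 - 4*b))"
    using b_less by (simp add: power2_eq_square field_simps)
  finally show ?thesis .
qed

lemma Gf_vertex_form:
  "Gf b v = Gf b (vmax b) - (Gf_sqrt b v - (1 - 2*b)/2)\<^sup>2 / (2*(1 - 4*b))"
proof -
  have "s * (1 - 2*b - s) = (1 - 2*b)\<^sup>2 / 4 - (s - (1 - 2*b)/2)\<^sup>2" for s
    by (simp add: power2_eq_square field_simps)
  then show ?thesis
    unfolding Gf_vmax Gf_eq_Gf_sqrt[of v] using b_less by (simp add: diff_divide_distrib)
qed

lemma Gf_minus: "Gf b (- v) = Gf b v"
  by (simp add: Gf_def)


lemma Gf_hull_eq_Gf: "vmax b \<le> \<bar>v\<bar> \<Longrightarrow> Gf_hull b v = Gf b v"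
  using Gf_sqrt_ge_iff[of v] by (simp add: Gf_hull_def Gf_vertex_form[of v])

lemma Gf_hull_eq_Gf_vmax: "\<bar>v\<bar> \<le> vmax b \<Longrightarrow> Gf_hull b v = Gf b (vmax b)"
  using Gf_sqrt_le_iff[of v] by (simp add: Gf_hull_def)

lemma Gf_le_Gf_hull: "Gf b v \<le> Gf_hull b v"
proof -
  have "(max (Gf_sqrt b v - (1 - 2*b)/2) 0)\<^sup>2 \<le> (Gf_sqrt b v - (1 - 2*b)/2)\<^sup>2"
    by (simp add: max_def)
  then show ?thesis
    unfolding Gf_hull_def Gf_vertex_form[of v] using b_less by (simp add: divide_right_mono)
qed

lemma concave_on_Gf_hull: "convex S \<Longrightarrow> concave_on S (Gf_hull b)"
proof -
  assume "convex S"
  have "convex_on UNIV (Gf_sqrt b)"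
    using convex_on_sqrt_quadratic[of "4*b\<^sup>2" "1 - 4*b"] b_less
    unfolding Gf_sqrt_def[abs_def] by simp
  then have "convex_on S (Gf_sqrt b)"
    using \<open>convex S\<close> by (rule convex_on_subset[OF _ subset_UNIV])
  then have "convex_on S (\<lambda>v. Gf_sqrt b v - (1 - 2*b)/2)"
    using \<open>convex S\<close> by (intro convex_on_diff concave_on_const[THEN iffD2])
  then have "convex_on S (\<lambda>v. (max (Gf_sqrt b v - (1 - 2*b)/2) 0)\<^sup>2 / (2*(1 - 4*b)))"
    using b_less by (intro convex_on_cdiv convex_on_max0_square) auto
  then show "concave_on S (Gf_hull b)"
    unfolding Gf_hull_def[abs_def] using \<open>convex S\<close>
    by (intro concave_on_diff concave_on_const[THEN iffD2])
qed

lemma upper_concave_envelope_Gf: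
  assumes "up \<le> - vmax b" "vmax b \<le> um" "v \<in> {up..um}"
  shows "upper_concave_envelope {up..um} (Gf b) v = Gf_hull b v"
proof (rule upper_concave_envelope_eqI)
  show "concave_on {up..um} (Gf_hull b)" by (simp add: concave_on_Gf_hull)
  show "Gf b x \<le> Gf_hull b x" for x by (rule Gf_le_Gf_hull)
  fix h assume h: "concave_on {up..um} h" "\<forall>x\<in>{up..um}. Gf b x \<le> h x"
  show "Gf_hull b v \<le> h v"
  proof (cases "vmax b \<le> \<bar>v\<bar>")
    case True
    then show ?thesis using h(2) assms(3) Gf_hull_eq_Gf by simp
  next
    case False
    have ends: "- vmax b \<in> {up..um}" "vmax b \<in> {up..um}" using assms vmax_pos by auto
    have "concave_on {- vmax b..vmax b} h"
      using h(1) ends unfolding concave_on_def by (auto intro: convex_on_subset)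
    then have "min (h (- vmax b)) (h (vmax b)) \<le> h v"
      using False by (intro concave_on_ge_min) auto
    moreover have "Gf b (vmax b) \<le> h (- vmax b)" "Gf b (vmax b) \<le> h (vmax b)"
      using h(2) ends Gf_minus[of "vmax b"] by force+
    ultimately show ?thesis using False Gf_hull_eq_Gf_vmax by simp
  qed
qed


lemma has_real_derivative_Gf_sqrt:
  "(Gf_sqrt b has_real_derivative (1 - 4*b) * v / Gf_sqrt b v) (at v)"
proof -
  have "0 < 4*b\<^sup>2 + (1 - 4*b) * v\<^sup>2"
    using b_pos b_less by (intro add_pos_nonneg) auto
  then show ?thesis
    unfolding Gf_sqrt_def[abs_def]
    by (auto intro!: derivative_eq_intros simp: field_simps)
qed

lemma has_real_derivative_Gf_hull: "(Gf_hull b has_real_derivative Gf_hull_slope b v) (at v)"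
proof -
  define p where "p = max (Gf_sqrt b v - (1 - 2*b)/2) 0"
  have "((\<lambda>v. Gf_sqrt b v - (1 - 2*b)/2) has_real_derivative (1 - 4*b) * v / Gf_sqrt b v) (at v)"
    using has_real_derivative_Gf_sqrt by (auto intro!: derivative_eq_intros)
  from DERIV_chain2[OF has_real_derivative_max0_square this]
  have "(Gf_hull b has_real_derivative 0 - 2 * p * ((1 - 4*b) * v / Gf_sqrt b v) / (2*(1 - 4*b))) (at v)"
    unfolding Gf_hull_def[abs_def] p_def by (intro DERIV_diff DERIV_const DERIV_cdivide)
  moreover have "0 - 2 * p * ((1 - 4*b) * v / Gf_sqrt b v) / (2*(1 - 4*b)) = Gf_hull_slope b v"
    using b_less Gf_sqrt_pos[of v] by (simp add: Gf_hull_slope_def p_def field_simps)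
  ultimately show ?thesis by simp
qed

lemma deriv_within_upper_concave_envelope_Gf:
  assumes "up \<le> - vmax b" "vmax b \<le> um" "v \<in> {up..um}"
  shows "deriv_within {up..um} (upper_concave_envelope {up..um} (Gf b)) v = Gf_hull_slope b v"
proof (rule deriv_within_Icc_eqI)
  show "up < um" using assms vmax_pos by simp
  show "(upper_concave_envelope {up..um} (Gf b) has_real_derivative Gf_hull_slope b v)
      (at v within {up..um})"
    using has_field_derivative_at_within[OF has_real_derivative_Gf_hull]
    by (rule has_field_derivative_transform_within[where d=1])
      (use assms upper_concave_envelope_Gf in auto)
qed (fact assms(3))

lemma Gf_hull_slope_minus: "Gf_hull_slope b (- v) = - Gf_hull_slope b v"
  by (simp add: Gf_hull_slope_def Gf_sqrt_minus)

lemma Gf_hull_slope_eq_0: "\<bar>v\<bar> \<le> vmax b \<Longrightarrow> Gf_hull_slope b v = 0"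
  using Gf_sqrt_le_iff[of v] by (simp add: Gf_hull_slope_def)

lemma Gf_hull_slope_neg_iff: "Gf_hull_slope b v < 0 \<longleftrightarrow> vmax b < v"
proof -
  have "Gf_hull_slope b v < 0 \<longleftrightarrow> 0 < max (Gf_sqrt b v - (1 - 2*b)/2) 0 * v"
    using Gf_sqrt_pos[of v] by (simp add: Gf_hull_slope_def zero_less_divide_iff)
  also have "\<dots> \<longleftrightarrow> vmax b < \<bar>v\<bar> \<and> 0 < v"
    using Gf_sqrt_le_iff[of v] by (auto simp: zero_less_mult_iff max_def)
  also have "\<dots> \<longleftrightarrow> vmax b < v"
    using vmax_pos by auto
  finally show ?thesis .
qed

lemma Gf_hull_slope_pos_iff: "0 < Gf_hull_slope b v \<longleftrightarrow> v < - vmax b"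
  using Gf_hull_slope_neg_iff[of "- v"] by (auto simp: Gf_hull_slope_minus)

lemma continuous_on_Gf_hull_slope: "continuous_on S (Gf_hull_slope b)"
proof -
  have "continuous_on S (Gf_sqrt b)"
    unfolding Gf_sqrt_def[abs_def] by (intro continuous_intros)
  then show ?thesis
    unfolding Gf_hull_slope_def[abs_def]
    using Gf_sqrt_pos by (intro continuous_intros) (auto simp: less_imp_neq[THEN not_sym])
qed


lemma Gf_hull_slope_outer:
  assumes "vmax b \<le> v"
  shows "Gf_hull_slope b v = - ((1 - (1 - 2*b)/2 / Gf_sqrt b v) * v)"
proof -
  have "max (Gf_sqrt b v - (1 - 2*b)/2) 0 = Gf_sqrt b v - (1 - 2*b)/2"
    using Gf_sqrt_ge_iff[of v] assms vmax_pos by simp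
  then show ?thesis
    using Gf_sqrt_pos[of v] by (simp add: Gf_hull_slope_def field_simps)
qed

lemma strict_antimono_on_Gf_hull_slope_right: "strict_antimono_on {vmax b..} (Gf_hull_slope b)"
proof (rule monotone_onI)
  fix v w assume v: "v \<in> {vmax b..}" and w: "w \<in> {vmax b..}" and "v < w"
  define c where "c = (1 - 2*b)/2"
  have "0 < v" using v vmax_pos by simp
  have "c < Gf_sqrt b w"
    using Gf_sqrt_le_iff[of w] \<open>v < w\<close> v by (auto simp: c_def)
  then have w_factor: "0 < 1 - c / Gf_sqrt b w"
    using Gf_sqrt_pos[of w] by (simp add: field_simps)
  have "c / Gf_sqrt b w \<le> c / Gf_sqrt b v"
    using Gf_sqrt_mono[of v w] Gf_sqrt_pos \<open>0 < v\<close> \<open>v < w\<close> b_less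
    by (intro divide_left_mono) (auto simp: c_def)
  then have "(1 - c / Gf_sqrt b v) * v \<le> (1 - c / Gf_sqrt b w) * v"
    using \<open>0 < v\<close> by (intro mult_right_mono) auto
  also have "\<dots> < (1 - c / Gf_sqrt b w) * w"
    using w_factor \<open>v < w\<close> by simp
  finally show "Gf_hull_slope b w < Gf_hull_slope b v"
    using v w by (simp add: Gf_hull_slope_outer c_def)
qed

lemma strict_antimono_on_Gf_hull_slope_left: "strict_antimono_on {..- vmax b} (Gf_hull_slope b)"
proof (rule monotone_onI)
  fix v w assume "v \<in> {..- vmax b}" "w \<in> {..- vmax b}" "v < w"
  then have "Gf_hull_slope b (- v) < Gf_hull_slope b (- w)"
    using monotone_onD[OF strict_antimono_on_Gf_hull_slope_right, of "- w" "- v"] by auto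
  then show "Gf_hull_slope b w < Gf_hull_slope b v"
    by (simp add: Gf_hull_slope_minus)
qed

end

theorem mainTheorem6:
  fixes b um up :: real
  assumes "0 < b" "b < 1/6"
    and "um \<in> {-1..1}" "up \<in> {-1..1}"
    and "um > vmax b" "up < - vmax b"
  shows "(\<forall>v \<in> {up..- vmax b} \<union> {vmax b..um}.
            upper_concave_envelope {up..um} (Gf b) v = Gf b v)
       \<and> (\<forall>v \<in> {- vmax b..vmax b}.
            upper_concave_envelope {up..um} (Gf b) v = Gf b (vmax b))
       \<and> (\<forall>t > 0.
            ((\<lambda>x. riemann_solution (Gf b) um up x t) \<longlongrightarrow> vmax b) (at_left 0)
          \<and> ((\<lambda>x. riemann_solution (Gf b) um up x t) \<longlongrightarrow> - vmax b) (at_right 0))"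
proof -
  interpret Gf_parameter b using assms(1,2) by unfold_locales
  have ends: "up \<le> - vmax b" "vmax b \<le> um" using assms(5,6) by auto
  note envelope = upper_concave_envelope_Gf[OF ends]
  note slope = deriv_within_upper_concave_envelope_Gf[OF ends]
  have outer: "upper_concave_envelope {up..um} (Gf b) v = Gf b v"
    if "v \<in> {up..- vmax b} \<union> {vmax b..um}" for v
  proof -
    have "v \<in> {up..um}" "vmax b \<le> \<bar>v\<bar>" using that ends vmax_pos by auto
    then show ?thesis using envelope Gf_hull_eq_Gf by simp
  qed
  have plateau: "upper_concave_envelope {up..um} (Gf b) v = Gf b (vmax b)"
    if "v \<in> {- vmax b..vmax b}" for v
    using that ends envelope Gf_hull_eq_Gf_vmax by auto
  have left: "((\<lambda>x. riemann_solution (Gf b) um up x t) \<longlongrightarrow> vmax b) (at_left 0)"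
    if "0 < t" for t
    using assms(5,6) vmax_pos that Gf_hull_slope_neg_iff Gf_hull_slope_pos_iff[of up]
      monotone_on_subset[OF strict_antimono_on_Gf_hull_slope_right, of "{vmax b..um}"]
    by (intro riemann_solution_tendsto_at_left[OF slope] continuous_on_Gf_hull_slope
        Gf_hull_slope_eq_0) auto
  have right: "((\<lambda>x. riemann_solution (Gf b) um up x t) \<longlongrightarrow> - vmax b) (at_right 0)"
    if "0 < t" for t
    using assms(5,6) vmax_pos that Gf_hull_slope_pos_iff Gf_hull_slope_neg_iff[of um]
      monotone_on_subset[OF strict_antimono_on_Gf_hull_slope_left, of "{up..- vmax b}"]
    by (intro riemann_solution_tendsto_at_right[OF slope] continuous_on_Gf_hull_slope
        Gf_hull_slope_eq_0) auto
  show ?thesis using outer plateau left right by blast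
qed

end
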